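(* Fix a round $t$, a level $m\ge1$ and an anchor task $a_t$, and suppose $w_t\le c_g\epsilon^U_{m-1}$. Under the assumptions in the context, a single generator call $\iota\sim\mathsf{Gen}(a_t,m,1)$ satisfies $$\Pr\big(\iota\in\mathcal I^\star_m(a_t)\,\big|\,w_t\le c_g\epsilon^U_{m-1}\big)\ge\delta_+(m,k),$$ where $$\delta_+(m,k):=\rho_m(\epsilon^U_m)\big[1-\eta_m(k)\big]_+-\rho_m(\epsilon^U_m)\,\varepsilon_{\mathrm{ICL}}(m,k),\qquad \eta_m(k):=\frac{1-\alpha^{(m)}_{i^\star_m}}{\alpha^{(m)}_{i^\star_m}}e^{-D^{(m)}_{\min}k/2}+(T_m-1)e^{-C^{(m)}k},$$ and $[x]_+:=\max\{x,0\}$.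
   Context: Tasks have long-run values $U^{(i)}\in[0,1]$, $U^\star:=\sup_iU^{(i)}$; $\epsilon^U_m:=\epsilon^U_02^{-m}$; $\mathcal I^\star_m(a_t):=\{i:U^\star-U^{(i)}\le\epsilon^U_m\}$ is the set of $\epsilon^U_m$-successful refinements; $w_t$ is the (uncertainty) width of anchor $a_t$ at round $t$ and $c_g>0$ a constant. Refinement model: conditioned on $w_t\le c_g\epsilon^U_{m-1}$, there is a latent refinement type $I^{(m)}\in\{1,\dots,T_m\}$ with prior weights $\alpha^{(m)}_i>0$, $\sum_i\alpha^{(m)}_i=1$. The prompt contains $k$ in-context examples $\mathcal D^{(m)}_{t,k}=\{s_1,\dots,s_k\}$, and under type $i$ they have predictive distributions $p^{(m)}_i(s_r\mid\mathcal D^{(m)}_{t,r-1})$. There is a distinguished true type $i^\star_m=i^\star_m(a_t)$ under which the data are generated. Identifiability: for each $j\ne i^\star_m$ let $Z_{j,r}:=\log\frac{p^{(m)}_j(s_r\mid\mathcal D^{(m)}_{t,r-1})}{p^{(m)}_{i^\star_m}(s_r\mid\mathcal D^{(m)}_{t,r-1})}$; there are constants $D_j>0$, $\nu_j$, $b_j>0$ such that under the true type, for all $r$, $\mathbb E[Z_{j,r}\mid\mathcal G_{r-1}]\le-D_j$ and $\mathbb E[\exp(\lambda(Z_{j,r}+D_j))\mid\mathcal G_{r-1}]\le\exp(\lambda^2\nu_j^2/2)$ for all $|\lambda|\le1/b_j$ ($\mathcal G_r$ the natural filtration); $D^{(m)}_{\min}:=\min_{j\ne i^\star_m}D_j$,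 $C^{(m)}:=\min_{j\ne i^\star_m}\frac{D_j^2}{8(\nu_j^2+b_jD_j/2)}$. The generator first samples a type $\widehat I\sim q_{m,k}(\cdot\mid a_t,\mathcal D^{(m)}_{t,k})$ and then a proposal $\iota$; given the true type the proposal succeeds with probability at least $1-\beta_m$: $\Pr(\iota\in\mathcal I^\star_m(a_t)\mid\widehat I=i^\star_m,a_t,m,\mathcal D^{(m)}_{t,k})\ge1-\beta_m$, $\beta_m\in[0,1)$; write $\rho_m(\epsilon^U_m):=1-\beta_m$. Let $\pi^{(m)}(\cdot\mid a_t,\mathcal D^{(m)}_{t,k})$ be the Bayes posterior over types; assume $\mathrm{TV}(q_{m,k}(\cdot\mid a_t,\mathcal D^{(m)}_{t,k}),\pi^{(m)}(\cdot\mid a_t,\mathcal D^{(m)}_{t,k}))\le\varepsilon_{\mathrm{ICL}}(m,k)$. *)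

theory Defs
  imports "HOL-Probability.Probability"
begin

text \<open>Prefix of the in-context data: the first r-1 examples s_1..s_{r-1}, i.e. D_{t,r-1}.\<close>
definition hist :: "(nat \<Rightarrow> 'w \<Rightarrow> 'x) \<Rightarrow> nat \<Rightarrow> 'w \<Rightarrow> 'x list" where
  "hist s r \<omega> = map (\<lambda>i. s i \<omega>) [1..<r]"

definition data :: "(nat \<Rightarrow> 'w \<Rightarrow> 'x) \<Rightarrow> nat \<Rightarrow> 'w \<Rightarrow> 'x list" where
  "data s k \<omega> = map (\<lambda>i. s i \<omega>) [1..<Suc k]"

definition nat_filt :: "'w measure \<Rightarrow> 'x measure \<Rightarrow> (nat \<Rightarrow> 'w \<Rightarrow> 'x) \<Rightarrow> nat \<Rightarrow> 'w measure" where
  "nat_filt M X s r =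
     sigma (space M) (\<Union>i\<in>{1..r}. {s i -` A \<inter> space M | A. A \<in> sets X})"

definition lik :: "(nat \<Rightarrow> 'x list \<Rightarrow> 'x \<Rightarrow> real) \<Rightarrow> nat \<Rightarrow> 'x list \<Rightarrow> real" where
  "lik p i d = (\<Prod>r<length d. p i (take r d) (d ! r))"

definition bayes_post :: "nat \<Rightarrow> (nat \<Rightarrow> real) \<Rightarrow> (nat \<Rightarrow> 'x list \<Rightarrow> 'x \<Rightarrow> real)
    \<Rightarrow> nat \<Rightarrow> 'x list \<Rightarrow> real" where
  "bayes_post T \<alpha> p i d = \<alpha> i * lik p i d / (\<Sum>j\<in>{1..T}. \<alpha> j * lik p j d)"

definition tv_dist :: "nat \<Rightarrow> (nat \<Rightarrow> real) \<Rightarrow> (nat \<Rightarrow> real) \<Rightarrow> real" where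
  "tv_dist T q \<pi> = (1/2) * (\<Sum>i\<in>{1..T}. \<bar>q i - \<pi> i\<bar>)"

definition llr :: "(nat \<Rightarrow> 'x list \<Rightarrow> 'x \<Rightarrow> real) \<Rightarrow> (nat \<Rightarrow> 'w \<Rightarrow> 'x) \<Rightarrow> nat \<Rightarrow> nat \<Rightarrow> nat \<Rightarrow> 'w \<Rightarrow> real" where
  "llr p s istar j r \<omega> = ln (p j (hist s r \<omega>) (s r \<omega>)) - ln (p istar (hist s r \<omega>) (s r \<omega>))"

definition succ_set :: "('c \<Rightarrow> real) \<Rightarrow> real \<Rightarrow> 'c set" where
  "succ_set U \<epsilon> = {i. (SUP j. U j) - U i \<le> \<epsilon>}"

definition pos_part :: "real \<Rightarrow> real" where
  "pos_part x = max x 0"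

definition eta :: "real \<Rightarrow> nat \<Rightarrow> real \<Rightarrow> real \<Rightarrow> nat \<Rightarrow> real" where
  "eta \<alpha>star T Dmin C k = (1 - \<alpha>star) / \<alpha>star * exp (- Dmin * real k / 2) + (real T - 1) * exp (- C * real k)"

definition delta_plus :: "real \<Rightarrow> real \<Rightarrow> real \<Rightarrow> real" where
  "delta_plus \<rho> \<eta> \<epsilon>ICL = \<rho> * pos_part (1 - \<eta>) - \<rho> * \<epsilon>ICL"

end

theory Submission
  imports Defs
begin

text \<open>
  The generator succeeds whenever it samples the true type and then proposes well, so the
  success probability is at least \<open>(1 - \<beta>)\<close> times the expected sampler mass on the true type,
  which differs from the expected Bayes posterior mass by at most \<open>\<epsilon>ICL\<close>.  The posterior mass
  of the true type is \<open>\<alpha>\<^sub>i\<^sub>\<star> / \<Sum>\<^sub>i \<alpha>\<^sub>i exp S\<^sub>i\<close>, where \<open>S\<^sub>j\<close> is the accumulated log-likelihood ratio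
  of type \<open>j\<close> against the true one.  Each \<open>S\<^sub>j\<close> is a sum of conditionally sub-exponential
  increments with drift \<open>-D\<^sub>j\<close>; iterating the conditional moment bound and applying Markov's
  inequality shows \<open>S\<^sub>j > -D\<^sub>j k/2\<close> with probability at most \<open>exp (-C k)\<close>.  Outside these
  events the posterior mass is at least \<open>1 - (1 - \<alpha>\<^sub>i\<^sub>\<star>)/\<alpha>\<^sub>i\<^sub>\<star> exp (-D\<^sub>m\<^sub>i\<^sub>n k/2)\<close>, and a union bound
  over the \<open>T - 1\<close> wrong types gives the claim.
\<close>

lemma (in sigma_finite_subalgebra) nn_cond_exp_eq_real_cond_exp:
  assumes g: "integrable M g" and g_nonneg: "\<And>x. 0 \<le> g x"
  shows "AE x in M. nn_cond_exp M F (\<lambda>x. ennreal (g x)) x = ennreal (real_cond_exp M F g x)"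
proof -
  have [measurable]: "g \<in> borel_measurable M" using g by auto
  have neg_part: "(\<lambda>x. ennreal (- g x)) = (\<lambda>x. 0)" using g_nonneg by (auto simp: ennreal_neg)
  have "(\<integral>\<^sup>+ x. 1 * nn_cond_exp M F (\<lambda>x. ennreal (g x)) x \<partial>M) = (\<integral>\<^sup>+ x. 1 * ennreal (g x) \<partial>M)"
    by (rule nn_cond_exp_intg) auto
  also have "\<dots> \<noteq> \<infinity>" using integrableD(2)[OF g] by simp
  finally have "AE x in M. nn_cond_exp M F (\<lambda>x. ennreal (g x)) x \<noteq> \<infinity>"
    by (intro nn_integral_PInf_AE) auto
  moreover have "AE x in M. (\<lambda>x. 0) x = nn_cond_exp M F (\<lambda>x. 0) x"
    by (rule nn_cond_exp_F_meas) auto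
  ultimately show ?thesis
    by eventually_elim (auto simp: real_cond_exp_def ennreal_enn2real_if neg_part)
qed

lemma (in sigma_finite_subalgebra) integral_le_measure_if_le_cond_exp_indicator:
  assumes "finite_measure M" and A: "A \<in> sets M" and g: "integrable M g"
    and le: "AE x in M. g x \<le> real_cond_exp M F (indicator A) x"
  shows "(\<integral>x. g x \<partial>M) \<le> measure M A"
proof -
  have int_A: "integrable M (indicator A :: 'a \<Rightarrow> real)"
    using A \<open>finite_measure M\<close>
    by (intro integrable_real_indicator) (auto simp: finite_measure.emeasure_finite less_top[symmetric])
  have "(\<integral>x. g x \<partial>M) \<le> (\<integral>x. real_cond_exp M F (indicator A) x \<partial>M)"
    using g real_cond_exp_int(1)[OF int_A] le by (rule integral_mono_AE)
  also have "\<dots> = measure M A"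
    using real_cond_exp_int(2)[OF int_A] A by simp
  finally show ?thesis .
qed

text \<open>Stated for the nonnegative integral, so that no integrability of the product is needed.\<close>

lemma nn_integral_prod_le_power_if_cond_exp_le:
  fixes N :: "'a measure" and F :: "nat \<Rightarrow> 'a measure" and X :: "nat \<Rightarrow> 'a \<Rightarrow> real"
  assumes N: "prob_space N"
    and sub: "\<And>r. r < n \<Longrightarrow> sigma_finite_subalgebra N (F r)"
    and mono: "\<And>r r'. r \<le> r' \<Longrightarrow> r' < n \<Longrightarrow> subalgebra (F r') (F r)"
    and adapted: "\<And>r. r \<in> {1..<n} \<Longrightarrow> X r \<in> borel_measurable (F r)"
    and nonneg: "\<And>r x. 0 \<le> X r x"
    and int: "\<And>r. r \<in> {1..n} \<Longrightarrow> integrable N (X r)"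
    and cond: "\<And>r. r \<in> {1..n} \<Longrightarrow> AE x in N. real_cond_exp N (F (r - 1)) (X r) x \<le> c"
    and c: "0 \<le> c"
  shows "(\<integral>\<^sup>+x. ennreal (\<Prod>r\<in>{1..n}. X r x) \<partial>N) \<le> ennreal (c ^ n)"
proof -
  have "(\<integral>\<^sup>+x. ennreal (\<Prod>r\<in>{1..m}. X r x) \<partial>N) \<le> ennreal (c ^ m)" if "m \<le> n" for m
    using that
  proof (induction m)
    case 0
    then show ?case by (simp add: prob_space.emeasure_space_1[OF N])
  next
    case (Suc m)
    interpret sigma_finite_subalgebra N "F m" using sub Suc.prems by simp
    define f where "f x = ennreal (\<Prod>r\<in>{1..m}. X r x)" for x
    define g where "g x = ennreal (X (Suc m) x)" for x
    have f_meas: "f \<in> borel_measurable (F m)"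
      unfolding f_def[abs_def] using Suc.prems
      by (intro measurable_compose[OF _ measurable_ennreal] borel_measurable_prod
          measurable_from_subalg[OF mono adapted]) auto
    have g_meas: "g \<in> borel_measurable N"
      unfolding g_def[abs_def] using int[of "Suc m"] Suc.prems by auto
    have "(\<integral>\<^sup>+x. ennreal (\<Prod>r\<in>{1..Suc m}. X r x) \<partial>N) = (\<integral>\<^sup>+x. f x * g x \<partial>N)"
      unfolding f_def g_def
      by (intro nn_integral_cong) (simp add: ennreal_mult' prod_nonneg nonneg mult.commute)
    also have "\<dots> = (\<integral>\<^sup>+x. f x * nn_cond_exp N (F m) g x \<partial>N)"
      using f_meas g_meas by (rule nn_cond_exp_intg[symmetric])
    also have "\<dots> \<le> (\<integral>\<^sup>+x. f x * ennreal c \<partial>N)"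
    proof (rule nn_integral_mono_AE)
      have "AE x in N. nn_cond_exp N (F m) g x = ennreal (real_cond_exp N (F m) (X (Suc m)) x)"
        unfolding g_def using int Suc.prems nonneg by (intro nn_cond_exp_eq_real_cond_exp) auto
      moreover have "AE x in N. real_cond_exp N (F m) (X (Suc m)) x \<le> c"
        using cond[of "Suc m"] Suc.prems by simp
      ultimately show "AE x in N. f x * nn_cond_exp N (F m) g x \<le> f x * ennreal c"
        by eventually_elim (auto intro!: mult_left_mono ennreal_leI)
    qed
    also have "\<dots> = (\<integral>\<^sup>+x. f x \<partial>N) * ennreal c"
      using measurable_from_subalg[OF subalg f_meas] by (rule nn_integral_multc)
    also have "\<dots> \<le> ennreal (c ^ m) * ennreal c"
      using Suc by (intro mult_right_mono) (auto simp: f_def)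
    also have "\<dots> = ennreal (c ^ Suc m)"
      using c by (simp add: ennreal_mult[symmetric] mult.commute)
    finally show ?case .
  qed
  then show ?thesis by simp
qed

lemma exists_chernoff_parameter:
  fixes D b \<nu> :: real
  assumes D: "D > 0" and b: "b > 0"
  shows "\<exists>l>0. l \<le> 1 / b \<and> l\<^sup>2 * \<nu>\<^sup>2 / 2 - l * D / 2 \<le> - (D\<^sup>2 / (8 * (\<nu>\<^sup>2 + b * D / 2)))"
proof (cases "b * D \<le> 2 * \<nu>\<^sup>2")
  case True
  then have \<nu>: "\<nu>\<^sup>2 > 0" using D b by (smt (verit) mult_pos_pos)
  define l where "l = D / (2 * \<nu>\<^sup>2)"
  have "l > 0" using D \<nu> by (simp add: l_def)
  moreover have "l \<le> 1 / b" using True b \<nu> unfolding l_def by (simp add: field_simps)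
  moreover have "l\<^sup>2 * \<nu>\<^sup>2 / 2 - l * D / 2 = - (D\<^sup>2 / (8 * \<nu>\<^sup>2))"
    unfolding l_def using \<nu> by (simp add: field_simps power2_eq_square)
  moreover have "D\<^sup>2 / (8 * (\<nu>\<^sup>2 + b * D / 2)) \<le> D\<^sup>2 / (8 * \<nu>\<^sup>2)"
    using \<nu> D b by (intro divide_left_mono) (auto intro!: mult_pos_pos add_pos_pos)
  ultimately show ?thesis by (intro exI[of _ l]) auto
next
  case False
  have "(1 / b)\<^sup>2 * \<nu>\<^sup>2 / 2 - 1 / b * D / 2 = (\<nu>\<^sup>2 - b * D) / (2 * b\<^sup>2)"
    using b by (simp add: field_simps power2_eq_square)
  also have "\<dots> \<le> - (D / (4 * b))"
    using False b D by (simp add: field_simps power2_eq_square)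
  also have "D\<^sup>2 / (8 * (\<nu>\<^sup>2 + b * D / 2)) \<le> D\<^sup>2 / (4 * b * D)"
    using D b by (intro divide_left_mono) (auto intro!: mult_pos_pos add_nonneg_pos)
  then have "- (D / (4 * b)) \<le> - (D\<^sup>2 / (8 * (\<nu>\<^sup>2 + b * D / 2)))"
    using D by (simp add: power2_eq_square)
  finally show ?thesis using b by (intro exI[of _ "1 / b"]) auto
qed

lemma prob_sum_gt_le_exp_if_cond_sub_exponential:
  fixes N :: "'a measure" and F :: "nat \<Rightarrow> 'a measure" and Z :: "nat \<Rightarrow> 'a \<Rightarrow> real"
    and D b \<nu> :: real
  assumes N: "prob_space N"
    and sub: "\<And>r. r < k \<Longrightarrow> sigma_finite_subalgebra N (F r)"
    and mono: "\<And>r r'. r \<le> r' \<Longrightarrow> r' < k \<Longrightarrow> subalgebra (F r') (F r)"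
    and adapted: "\<And>r. r \<in> {1..<k} \<Longrightarrow> Z r \<in> borel_measurable (F r)"
    and meas: "\<And>r. r \<in> {1..k} \<Longrightarrow> Z r \<in> borel_measurable N"
    and D: "D > 0" and b: "b > 0"
    and mgf_int: "\<And>r l. r \<in> {1..k} \<Longrightarrow> \<bar>l\<bar> \<le> 1 / b \<Longrightarrow>
        integrable N (\<lambda>x. exp (l * (Z r x + D)))"
    and mgf: "\<And>r l. r \<in> {1..k} \<Longrightarrow> \<bar>l\<bar> \<le> 1 / b \<Longrightarrow>
        AE x in N. real_cond_exp N (F (r - 1)) (\<lambda>x. exp (l * (Z r x + D))) x \<le> exp (l\<^sup>2 * \<nu>\<^sup>2 / 2)"
  shows "measure N {x \<in> space N. - (D * real k / 2) < (\<Sum>r\<in>{1..k}. Z r x)}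
           \<le> exp (- (D\<^sup>2 / (8 * (\<nu>\<^sup>2 + b * D / 2))) * real k)"
proof -
  interpret prob_space N by (rule N)
  obtain l where l: "l > 0" "l \<le> 1 / b"
      "l\<^sup>2 * \<nu>\<^sup>2 / 2 - l * D / 2 \<le> - (D\<^sup>2 / (8 * (\<nu>\<^sup>2 + b * D / 2)))"
    using exists_chernoff_parameter[OF D b] by blast
  then have l_abs: "\<bar>l\<bar> \<le> 1 / b" by simp
  define E where "E x = exp (l * (\<Sum>r\<in>{1..k}. Z r x + D))" for x
  have E_prod: "E x = (\<Prod>r\<in>{1..k}. exp (l * (Z r x + D)))" for x
    by (simp add: E_def sum_distrib_left exp_sum)
  have E_meas: "(\<lambda>x. ennreal (E x)) \<in> borel_measurable N"
    unfolding E_def[abs_def] using meas by measurable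
  have mgf_prod: "(\<integral>\<^sup>+x. ennreal (E x) \<partial>N) \<le> ennreal (exp (l\<^sup>2 * \<nu>\<^sup>2 / 2) ^ k)"
    unfolding E_prod using N sub mono
  proof (rule nn_integral_prod_le_power_if_cond_exp_le)
    show "(\<lambda>x. exp (l * (Z r x + D))) \<in> borel_measurable (F r)" if "r \<in> {1..<k}" for r
      using adapted[OF that] by measurable
  qed (use mgf_int mgf l_abs in auto)
  have markov: "indicator {x \<in> space N. - (D * real k / 2) < (\<Sum>r\<in>{1..k}. Z r x)} x
      \<le> ennreal (E x) * ennreal (exp (- (l * D * real k / 2)))" for x
  proof (cases "- (D * real k / 2) < (\<Sum>r\<in>{1..k}. Z r x) \<and> x \<in> space N")
    case True
    then have "0 < l * ((\<Sum>r\<in>{1..k}. Z r x) + D * real k / 2)"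
      using l by (intro mult_pos_pos) auto
    then have "0 \<le> l * (\<Sum>r\<in>{1..k}. Z r x + D) + - (l * D * real k / 2)"
      by (simp add: sum.distrib algebra_simps)
    then have "1 \<le> E x * exp (- (l * D * real k / 2))"
      by (simp add: E_def exp_add[symmetric])
    then show ?thesis using True by (simp add: E_def ennreal_mult[symmetric])
  qed auto
  have "{x \<in> space N. - (D * real k / 2) < (\<Sum>r\<in>{1..k}. Z r x)} \<in> sets N"
    using meas by measurable
  then have "emeasure N {x \<in> space N. - (D * real k / 2) < (\<Sum>r\<in>{1..k}. Z r x)}
      = (\<integral>\<^sup>+x. indicator {x \<in> space N. - (D * real k / 2) < (\<Sum>r\<in>{1..k}. Z r x)} x \<partial>N)"
    by (rule nn_integral_indicator[symmetric])
  also have "\<dots> \<le> (\<integral>\<^sup>+x. ennreal (E x) * ennreal (exp (- (l * D * real k / 2))) \<partial>N)"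
    by (intro nn_integral_mono markov)
  also have "\<dots> = (\<integral>\<^sup>+x. ennreal (E x) \<partial>N) * ennreal (exp (- (l * D * real k / 2)))"
    using E_meas by (rule nn_integral_multc)
  also have "\<dots> \<le> ennreal (exp (l\<^sup>2 * \<nu>\<^sup>2 / 2) ^ k) * ennreal (exp (- (l * D * real k / 2)))"
    using mgf_prod by (rule mult_right_mono) simp
  also have "\<dots> = ennreal (exp (real k * (l\<^sup>2 * \<nu>\<^sup>2 / 2 - l * D / 2)))"
    by (simp add: ennreal_mult[symmetric] exp_of_nat_mult[symmetric] exp_add[symmetric] algebra_simps)
  also have "\<dots> \<le> ennreal (exp (- (D\<^sup>2 / (8 * (\<nu>\<^sup>2 + b * D / 2))) * real k))"
    using mult_left_mono[OF l(3), of "real k"] by (intro ennreal_leI) (simp add: mult.commute)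
  finally show ?thesis by (simp add: emeasure_eq_measure ennreal_le_iff)
qed

lemma (in prob_space) expectation_ge_sub_sum_prob:
  fixes f :: "'a \<Rightarrow> real" and B :: "'i \<Rightarrow> 'a set"
  assumes J: "finite J" and B: "\<And>j. j \<in> J \<Longrightarrow> B j \<in> events"
    and f: "integrable M f" "\<And>x. x \<in> space M \<Longrightarrow> 0 \<le> f x"
    and c: "c \<le> 1" "\<And>x. x \<in> space M \<Longrightarrow> x \<notin> (\<Union>j\<in>J. B j) \<Longrightarrow> c \<le> f x"
  shows "c - (\<Sum>j\<in>J. prob (B j)) \<le> expectation f"
proof -
  have int_B: "integrable M (indicator (B j) :: 'a \<Rightarrow> real)" if "j \<in> J" for j
    using B[OF that] by (intro integrable_real_indicator) (auto simp: emeasure_eq_measure)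
  have "c - (\<Sum>j\<in>J. indicator (B j) x) \<le> f x" if x: "x \<in> space M" for x
  proof (cases "x \<in> (\<Union>j\<in>J. B j)")
    case True
    then obtain j where "j \<in> J" "x \<in> B j" by blast
    then have "1 \<le> (\<Sum>j\<in>J. indicator (B j) x :: real)"
      using J member_le_sum[of j J "\<lambda>j. indicator (B j) x :: real"] by auto
    then show ?thesis using c(1) f(2)[OF x] by linarith
  next
    case False
    then show ?thesis using c(2)[OF x] by (simp add: indicator_def)
  qed
  then have "expectation (\<lambda>x. c - (\<Sum>j\<in>J. indicator (B j) x)) \<le> expectation f"
    using int_B f(1) by (intro integral_mono) auto
  also have "expectation (\<lambda>x. c - (\<Sum>j\<in>J. indicator (B j) x)) = c - (\<Sum>j\<in>J. prob (B j))"
    using int_B B by (simp add: Bochner_Integration.integral_diff Bochner_Integration.integral_sum prob_space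
        Int_absorb2 sets.sets_into_space)
  finally show ?thesis .
qed

lemma posterior_weight_bounds:
  fixes \<alpha> e :: "'i \<Rightarrow> real"
  assumes "finite I" "i\<^sub>0 \<in> I" "e i\<^sub>0 = 1"
    and \<alpha>: "\<And>i. i \<in> I \<Longrightarrow> 0 < \<alpha> i" and e: "\<And>i. i \<in> I \<Longrightarrow> 0 \<le> e i"
  shows "0 \<le> \<alpha> i\<^sub>0 / (\<Sum>i\<in>I. \<alpha> i * e i)" "\<alpha> i\<^sub>0 / (\<Sum>i\<in>I. \<alpha> i * e i) \<le> 1"
proof -
  have "(\<Sum>i\<in>I. \<alpha> i * e i) = \<alpha> i\<^sub>0 + (\<Sum>i\<in>I - {i\<^sub>0}. \<alpha> i * e i)"
    using assms by (simp add: sum.remove)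
  moreover have "0 \<le> (\<Sum>i\<in>I - {i\<^sub>0}. \<alpha> i * e i)"
    using \<alpha> e by (intro sum_nonneg) (simp add: less_imp_le)
  moreover have "0 < \<alpha> i\<^sub>0" using \<alpha> assms(2) by simp
  ultimately show "0 \<le> \<alpha> i\<^sub>0 / (\<Sum>i\<in>I. \<alpha> i * e i)" "\<alpha> i\<^sub>0 / (\<Sum>i\<in>I. \<alpha> i * e i) \<le> 1"
    by simp_all
qed

lemma posterior_weight_ge:
  fixes \<alpha> e :: "'i \<Rightarrow> real"
  assumes fin: "finite I" and i\<^sub>0: "i\<^sub>0 \<in> I" and e_i\<^sub>0: "e i\<^sub>0 = 1"
    and \<alpha>: "\<And>i. i \<in> I \<Longrightarrow> 0 < \<alpha> i" and \<alpha>_sum: "(\<Sum>i\<in>I. \<alpha> i) = 1"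
    and e: "\<And>i. i \<in> I \<Longrightarrow> 0 \<le> e i" and e_le: "\<And>j. j \<in> I - {i\<^sub>0} \<Longrightarrow> e j \<le> E"
  shows "1 - (1 - \<alpha> i\<^sub>0) / \<alpha> i\<^sub>0 * E \<le> \<alpha> i\<^sub>0 / (\<Sum>i\<in>I. \<alpha> i * e i)"
proof -
  define R where "R = (\<Sum>i\<in>I - {i\<^sub>0}. \<alpha> i * e i)"
  have a: "0 < \<alpha> i\<^sub>0" using \<alpha> i\<^sub>0 by simp
  have R_nonneg: "0 \<le> R" unfolding R_def using \<alpha> e by (intro sum_nonneg) (simp add: less_imp_le)
  have "R \<le> (\<Sum>i\<in>I - {i\<^sub>0}. \<alpha> i * E)"
    unfolding R_def using \<alpha> e_le by (intro sum_mono mult_left_mono) (auto intro: less_imp_le)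
  also have "\<dots> = (1 - \<alpha> i\<^sub>0) * E"
    using \<alpha>_sum fin i\<^sub>0 by (simp add: sum_distrib_right[symmetric] sum_diff1)
  finally have "R / \<alpha> i\<^sub>0 \<le> (1 - \<alpha> i\<^sub>0) / \<alpha> i\<^sub>0 * E"
    using a by (simp add: divide_right_mono)
  moreover have "1 - R / \<alpha> i\<^sub>0 \<le> \<alpha> i\<^sub>0 / (\<alpha> i\<^sub>0 + R)"
  proof -
    have "(1 - R / \<alpha> i\<^sub>0) * (\<alpha> i\<^sub>0 + R) = \<alpha> i\<^sub>0 - R * R / \<alpha> i\<^sub>0"
      using a by (simp add: field_simps)
    also have "\<dots> \<le> \<alpha> i\<^sub>0" using a R_nonneg by simp
    finally show ?thesis using a R_nonneg by (simp add: pos_le_divide_eq)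
  qed
  moreover have "(\<Sum>i\<in>I. \<alpha> i * e i) = \<alpha> i\<^sub>0 + R"
    unfolding R_def using fin i\<^sub>0 e_i\<^sub>0 by (simp add: sum.remove)
  ultimately show ?thesis by simp
qed

lemma (in prob_space) integrable_posterior_weight:
  fixes \<alpha> :: "'i \<Rightarrow> real" and S :: "'i \<Rightarrow> 'a \<Rightarrow> real"
  assumes "finite I" "i\<^sub>0 \<in> I" "\<And>x. S i\<^sub>0 x = 0" "\<And>i. i \<in> I \<Longrightarrow> 0 < \<alpha> i"
    and S: "\<And>i. i \<in> I \<Longrightarrow> random_variable borel (S i)"
  shows "integrable M (\<lambda>x. \<alpha> i\<^sub>0 / (\<Sum>i\<in>I. \<alpha> i * exp (S i x)))"
proof (rule integrable_const_bound[where B = 1])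
  have "0 \<le> \<alpha> i\<^sub>0 / (\<Sum>i\<in>I. \<alpha> i * exp (S i x)) \<and> \<alpha> i\<^sub>0 / (\<Sum>i\<in>I. \<alpha> i * exp (S i x)) \<le> 1" for x
    using posterior_weight_bounds[of I i\<^sub>0 "\<lambda>i. exp (S i x)" \<alpha>] assms by auto
  then show "AE x in M. norm (\<alpha> i\<^sub>0 / (\<Sum>i\<in>I. \<alpha> i * exp (S i x))) \<le> 1"
    by (metis (no_types, lifting) AE_I2 abs_of_nonneg real_norm_def)
  show "(\<lambda>x. \<alpha> i\<^sub>0 / (\<Sum>i\<in>I. \<alpha> i * exp (S i x))) \<in> borel_measurable M"
    using S by measurable
qed

lemma (in prob_space) expectation_posterior_weight_ge:
  fixes \<alpha> :: "'i \<Rightarrow> real" and S :: "'i \<Rightarrow> 'a \<Rightarrow> real" and t :: real and t' :: "'i \<Rightarrow> real"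
  assumes I: "finite I" "i\<^sub>0 \<in> I" and S_i\<^sub>0: "\<And>x. S i\<^sub>0 x = 0"
    and \<alpha>: "\<And>i. i \<in> I \<Longrightarrow> 0 < \<alpha> i" and \<alpha>_sum: "(\<Sum>i\<in>I. \<alpha> i) = 1"
    and S: "\<And>i. i \<in> I \<Longrightarrow> random_variable borel (S i)"
    and t: "\<And>j. j \<in> I - {i\<^sub>0} \<Longrightarrow> t \<le> t' j"
    and tail: "\<And>j. j \<in> I - {i\<^sub>0} \<Longrightarrow> prob {x \<in> space M. - t' j < S j x} \<le> \<delta>"
  shows "1 - (1 - \<alpha> i\<^sub>0) / \<alpha> i\<^sub>0 * exp (- t) - (real (card I) - 1) * \<delta>
      \<le> expectation (\<lambda>x. \<alpha> i\<^sub>0 / (\<Sum>i\<in>I. \<alpha> i * exp (S i x)))"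
proof -
  have \<alpha>_le_1: "\<alpha> i\<^sub>0 \<le> 1"
    using \<alpha>_sum member_le_sum[of i\<^sub>0 I \<alpha>] I \<alpha> by (auto intro: less_imp_le)
  have "1 - (1 - \<alpha> i\<^sub>0) / \<alpha> i\<^sub>0 * exp (- t) - (\<Sum>j\<in>I - {i\<^sub>0}. prob {x \<in> space M. - t' j < S j x})
      \<le> expectation (\<lambda>x. \<alpha> i\<^sub>0 / (\<Sum>i\<in>I. \<alpha> i * exp (S i x)))"
  proof (rule expectation_ge_sub_sum_prob)
    show "{x \<in> space M. - t' j < S j x} \<in> events" if "j \<in> I - {i\<^sub>0}" for j
    proof -
      have [measurable]: "S j \<in> borel_measurable M" using S that by simp
      show ?thesis by measurable
    qed
    show "integrable M (\<lambda>x. \<alpha> i\<^sub>0 / (\<Sum>i\<in>I. \<alpha> i * exp (S i x)))"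
      using I S_i\<^sub>0 \<alpha> S by (rule integrable_posterior_weight)
    show "0 \<le> \<alpha> i\<^sub>0 / (\<Sum>i\<in>I. \<alpha> i * exp (S i x))" for x
      using posterior_weight_bounds[of I i\<^sub>0 "\<lambda>i. exp (S i x)" \<alpha>] I S_i\<^sub>0 \<alpha> by auto
    show "1 - (1 - \<alpha> i\<^sub>0) / \<alpha> i\<^sub>0 * exp (- t) \<le> 1"
      using \<alpha>[OF I(2)] \<alpha>_le_1 by simp
    show "1 - (1 - \<alpha> i\<^sub>0) / \<alpha> i\<^sub>0 * exp (- t) \<le> \<alpha> i\<^sub>0 / (\<Sum>i\<in>I. \<alpha> i * exp (S i x))"
      if "x \<notin> (\<Union>j\<in>I - {i\<^sub>0}. {x \<in> space M. - t' j < S j x})" "x \<in> space M" for x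
    proof (rule posterior_weight_ge[OF I _ \<alpha> \<alpha>_sum])
      fix j assume j: "j \<in> I - {i\<^sub>0}"
      then have "\<not> - t' j < S j x" using that by blast
      then show "exp (S j x) \<le> exp (- t)" using t[OF j] by simp
    qed (simp_all add: S_i\<^sub>0)
  qed (use I in simp)
  moreover have "(\<Sum>j\<in>I - {i\<^sub>0}. prob {x \<in> space M. - t' j < S j x}) \<le> (\<Sum>j\<in>I - {i\<^sub>0}. \<delta>)"
    using tail by (rule sum_mono)
  moreover have "card I \<ge> 1" using I by (auto simp: Suc_le_eq card_gt_0_iff)
  then have "(\<Sum>j\<in>I - {i\<^sub>0}. \<delta>) = (real (card I) - 1) * \<delta>"
    using I by (simp add: card_Diff_singleton of_nat_diff)
  ultimately show ?thesis by linarith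
qed

lemma lik_data_eq_prod: "lik p i (data s k \<omega>) = (\<Prod>r\<in>{1..k}. p i (hist s r \<omega>) (s r \<omega>))"
proof -
  have "lik p i (data s k \<omega>) = (\<Prod>r<k. p i (hist s (Suc r) \<omega>) (s (Suc r) \<omega>))"
    unfolding lik_def data_def hist_def
    by (intro prod.cong) (auto simp del: upt_Suc simp: take_map take_upt nth_map)
  also have "\<dots> = (\<Prod>r\<in>{1..k}. p i (hist s r \<omega>) (s r \<omega>))"
    by (simp add: prod.atLeast1_atMost_eq)
  finally show ?thesis .
qed

lemma bayes_post_data_eq:
  assumes istar: "istar \<in> {1..T}" and p_pos: "\<And>i h x. i \<in> {1..T} \<Longrightarrow> 0 < p i h x"
  shows "bayes_post T \<alpha> p istar (data s k \<omega>)
    = \<alpha> istar / (\<Sum>i\<in>{1..T}. \<alpha> i * exp (\<Sum>r\<in>{1..k}. llr p s istar i r \<omega>))"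
proof -
  let ?L = "\<lambda>i. lik p i (data s k \<omega>)"
  have L_pos: "0 < ?L istar"
    unfolding lik_data_eq_prod using p_pos[OF istar] by (intro prod_pos) auto
  have ratio: "exp (\<Sum>r\<in>{1..k}. llr p s istar i r \<omega>) = ?L i / ?L istar" if "i \<in> {1..T}" for i
    unfolding lik_data_eq_prod llr_def using p_pos[OF that] p_pos[OF istar]
    by (simp add: exp_sum exp_diff prod_dividef)
  have "(\<Sum>i\<in>{1..T}. \<alpha> i * exp (\<Sum>r\<in>{1..k}. llr p s istar i r \<omega>))
      = (\<Sum>i\<in>{1..T}. \<alpha> i * (?L i / ?L istar))"
    by (intro sum.cong refl) (simp only: ratio)
  also have "\<dots> = (\<Sum>i\<in>{1..T}. \<alpha> i * ?L i) / ?L istar"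
    by (simp add: sum_divide_distrib)
  finally have "(\<Sum>i\<in>{1..T}. \<alpha> i * exp (\<Sum>r\<in>{1..k}. llr p s istar i r \<omega>))
      = (\<Sum>i\<in>{1..T}. \<alpha> i * ?L i) / ?L istar" .
  then show ?thesis
    unfolding bayes_post_def using L_pos by simp
qed

lemma sum_bayes_post:
  assumes "T \<ge> 1" and \<alpha>: "\<And>i. i \<in> {1..T} \<Longrightarrow> 0 < \<alpha> i"
    and p_pos: "\<And>i h x. i \<in> {1..T} \<Longrightarrow> 0 < p i h x"
  shows "(\<Sum>i\<in>{1..T}. bayes_post T \<alpha> p i d) = 1"
proof -
  have "0 < lik p i d" if "i \<in> {1..T}" for i
    unfolding lik_def using p_pos[OF that] by (intro prod_pos) auto
  then have "0 < (\<Sum>i\<in>{1..T}. \<alpha> i * lik p i d)"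
    using assms by (intro sum_pos) auto
  then show ?thesis
    unfolding bayes_post_def by (simp add: sum_divide_distrib[symmetric])
qed

lemma tv_dist_ge_diff:
  assumes i: "i \<in> {1..T}" and q: "(\<Sum>j\<in>{1..T}. q j) = 1" and \<pi>: "(\<Sum>j\<in>{1..T}. \<pi> j) = 1"
  shows "\<pi> i - q i \<le> tv_dist T q \<pi>"
proof -
  have "\<pi> i - q i = (\<Sum>j\<in>{1..T} - {i}. q j - \<pi> j)"
    using i q \<pi> by (simp add: sum_subtractf sum_diff1)
  also have "\<dots> \<le> (\<Sum>j\<in>{1..T} - {i}. \<bar>q j - \<pi> j\<bar>)"
    by (intro sum_mono) auto
  finally have "\<pi> i - q i \<le> (\<Sum>j\<in>{1..T} - {i}. \<bar>q j - \<pi> j\<bar>)" .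
  moreover have "(\<Sum>j\<in>{1..T}. \<bar>q j - \<pi> j\<bar>) = \<bar>q i - \<pi> i\<bar> + (\<Sum>j\<in>{1..T} - {i}. \<bar>q j - \<pi> j\<bar>)"
    using i by (simp add: sum.remove)
  ultimately show ?thesis unfolding tv_dist_def by linarith
qed

lemma
  shows space_nat_filt [simp]: "space (nat_filt M X s r) = space M"
    and sets_nat_filt:
      "sets (nat_filt M X s r) = sigma_sets (space M) (\<Union>i\<in>{1..r}. {s i -` A \<inter> space M | A. A \<in> sets X})"
  unfolding nat_filt_def by (auto intro!: space_measure_of sets_measure_of)

lemma subalgebra_nat_filt:
  assumes "\<And>i. i \<in> {1..r} \<Longrightarrow> s i \<in> measurable M X"
  shows "subalgebra M (nat_filt M X s r)"
  unfolding subalgebra_def sets_nat_filt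
  using assms by (auto intro!: sets.sigma_sets_subset measurable_sets)

lemma subalgebra_nat_filt_mono:
  assumes "r \<le> r'"
  shows "subalgebra (nat_filt M X s r') (nat_filt M X s r)"
  unfolding subalgebra_def sets_nat_filt
  using assms by (intro conjI refl sigma_sets_mono' UN_mono) auto

lemma sigma_finite_subalgebra_nat_filt:
  assumes "finite_measure N" and sets_N: "sets N = sets M"
    and s: "\<And>i. i \<in> {1..r} \<Longrightarrow> s i \<in> measurable M X"
  shows "sigma_finite_subalgebra N (nat_filt M X s r)"
proof (intro finite_measure_subalgebra_is_sigma_finite finite_measure_subalgebra.intro
    finite_measure_subalgebra_axioms.intro)
  show "subalgebra N (nat_filt M X s r)"
    using subalgebra_nat_filt[OF s] sets_N sets_eq_imp_space_eq[OF sets_N]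
    by (simp add: subalgebra_def)
qed fact

lemma (in prob_space) expectation_ge_if_tv_dist_le:
  fixes q \<pi> :: "nat \<Rightarrow> 'a \<Rightarrow> real"
  assumes i: "i \<in> {1..T}"
    and q_sum: "\<And>x. x \<in> space M \<Longrightarrow> (\<Sum>j\<in>{1..T}. q j x) = 1"
    and q_nonneg: "\<And>j x. j \<in> {1..T} \<Longrightarrow> x \<in> space M \<Longrightarrow> 0 \<le> q j x"
    and q_meas: "random_variable borel (q i)"
    and \<pi>_sum: "\<And>x. x \<in> space M \<Longrightarrow> (\<Sum>j\<in>{1..T}. \<pi> j x) = 1"
    and \<pi>_int: "integrable M (\<pi> i)"
    and tv: "\<And>x. x \<in> space M \<Longrightarrow> tv_dist T (\<lambda>j. q j x) (\<lambda>j. \<pi> j x) \<le> \<epsilon>"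
  shows "integrable M (q i)" and "expectation (\<pi> i) - \<epsilon> \<le> expectation (q i)"
proof -
  show q_int: "integrable M (q i)"
  proof (rule integrable_const_bound[where B = 1])
    have "q i x \<le> (\<Sum>j\<in>{1..T}. q j x)" if "x \<in> space M" for x
      using q_nonneg that i by (intro member_le_sum) auto
    then show "AE x in M. norm (q i x) \<le> 1"
      using q_sum q_nonneg[OF i] by (intro AE_I2) simp
  qed (fact q_meas)
  have "\<pi> i x - \<epsilon> \<le> q i x" if "x \<in> space M" for x
    using tv_dist_ge_diff[OF i q_sum[OF that] \<pi>_sum[OF that]] tv[OF that] by simp
  then have "expectation (\<lambda>x. \<pi> i x - \<epsilon>) \<le> expectation (q i)"
    using \<pi>_int q_int by (intro integral_mono) auto
  then show "expectation (\<pi> i) - \<epsilon> \<le> expectation (q i)"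
    using \<pi>_int prob_space by (simp add: Bochner_Integration.integral_diff)
qed

lemma expectation_bayes_post_ge:
  fixes N :: "'w measure" and F :: "nat \<Rightarrow> 'w measure" and s :: "nat \<Rightarrow> 'w \<Rightarrow> 'x"
    and p :: "nat \<Rightarrow> 'x list \<Rightarrow> 'x \<Rightarrow> real" and \<alpha> D b \<nu> :: "nat \<Rightarrow> real" and T istar k :: nat
  defines "Dmin \<equiv> Min (D ` ({1..T} - {istar}))"
    and "C \<equiv> Min ((\<lambda>j. (D j)\<^sup>2 / (8 * ((\<nu> j)\<^sup>2 + b j * D j / 2))) ` ({1..T} - {istar}))"
  assumes N: "prob_space N"
    and F_sub: "\<And>r. r \<le> k \<Longrightarrow> sigma_finite_subalgebra N (F r)"
    and F_mono: "\<And>r r'. r \<le> r' \<Longrightarrow> subalgebra (F r') (F r)"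
    and istar: "istar \<in> {1..T}"
    and \<alpha>_pos: "\<And>i. i \<in> {1..T} \<Longrightarrow> 0 < \<alpha> i" and \<alpha>_sum: "(\<Sum>i\<in>{1..T}. \<alpha> i) = 1"
    and p_pos: "\<And>i h x. i \<in> {1..T} \<Longrightarrow> 0 < p i h x"
    and D_pos: "\<And>j. j \<in> {1..T} - {istar} \<Longrightarrow> 0 < D j"
    and b_pos: "\<And>j. j \<in> {1..T} - {istar} \<Longrightarrow> 0 < b j"
    and Z_adapted: "\<And>j r. j \<in> {1..T} - {istar} \<Longrightarrow> r \<in> {1..k} \<Longrightarrow>
        llr p s istar j r \<in> borel_measurable (F r)"
    and Z_mgf_int: "\<And>j r l. j \<in> {1..T} - {istar} \<Longrightarrow> r \<in> {1..k} \<Longrightarrow> \<bar>l\<bar> \<le> 1 / b j \<Longrightarrow>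
        integrable N (\<lambda>\<omega>. exp (l * (llr p s istar j r \<omega> + D j)))"
    and Z_mgf: "\<And>j r l. j \<in> {1..T} - {istar} \<Longrightarrow> r \<in> {1..k} \<Longrightarrow> \<bar>l\<bar> \<le> 1 / b j \<Longrightarrow>
        AE \<omega> in N. real_cond_exp N (F (r - 1)) (\<lambda>\<omega>. exp (l * (llr p s istar j r \<omega> + D j))) \<omega>
          \<le> exp (l\<^sup>2 * (\<nu> j)\<^sup>2 / 2)"
  shows "integrable N (\<lambda>\<omega>. bayes_post T \<alpha> p istar (data s k \<omega>))"
    and "pos_part (1 - eta (\<alpha> istar) T Dmin C k)
      \<le> prob_space.expectation N (\<lambda>\<omega>. bayes_post T \<alpha> p istar (data s k \<omega>))"
proof -
  interpret N: prob_space N by (rule N)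
  define S where "S j \<omega> = (\<Sum>r\<in>{1..k}. llr p s istar j r \<omega>)" for j \<omega>
  have post_eq: "(\<lambda>\<omega>. bayes_post T \<alpha> p istar (data s k \<omega>))
      = (\<lambda>\<omega>. \<alpha> istar / (\<Sum>i\<in>{1..T}. \<alpha> i * exp (S i \<omega>)))"
    unfolding S_def by (intro ext bayes_post_data_eq[OF istar p_pos])
  have S_istar: "S istar = (\<lambda>_. 0)" by (simp add: S_def[abs_def] llr_def)
  have llr_meas: "llr p s istar j r \<in> borel_measurable N" if "j \<in> {1..T} - {istar}" "r \<in> {1..k}" for j r
    using that by (intro measurable_from_subalg[OF sigma_finite_subalgebra.subalg[OF F_sub] Z_adapted]) auto
  have S_meas: "S j \<in> borel_measurable N" if "j \<in> {1..T}" for j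
  proof (cases "j = istar")
    case True
    then show ?thesis by (simp add: S_istar)
  next
    case False
    then show ?thesis unfolding S_def[abs_def] using llr_meas that by (intro borel_measurable_sum) auto
  qed
  show "integrable N (\<lambda>\<omega>. bayes_post T \<alpha> p istar (data s k \<omega>))"
    unfolding post_eq using istar \<alpha>_pos S_meas by (intro N.integrable_posterior_weight) (auto simp: S_istar)
  have tail: "N.prob {\<omega> \<in> space N. - (D j * real k / 2) < S j \<omega>} \<le> exp (- C * real k)"
    if j: "j \<in> {1..T} - {istar}" for j
  proof -
    have "N.prob {\<omega> \<in> space N. - (D j * real k / 2) < S j \<omega>}
        \<le> exp (- ((D j)\<^sup>2 / (8 * ((\<nu> j)\<^sup>2 + b j * D j / 2))) * real k)"
      unfolding S_def using N F_sub F_mono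
      by (rule prob_sum_gt_le_exp_if_cond_sub_exponential)
        (use j D_pos b_pos Z_adapted llr_meas Z_mgf_int Z_mgf in auto)
    moreover have "C \<le> (D j)\<^sup>2 / (8 * ((\<nu> j)\<^sup>2 + b j * D j / 2))"
      unfolding C_def using j by (intro Min_le) auto
    ultimately show ?thesis by (smt (verit) exp_mono mult_right_mono of_nat_0_le_iff)
  qed
  have "Dmin * real k / 2 \<le> D j * real k / 2" if "j \<in> {1..T} - {istar}" for j
    using Min_le[of "D ` ({1..T} - {istar})" "D j"] that
    by (simp add: Dmin_def divide_right_mono mult_right_mono)
  then have "1 - (1 - \<alpha> istar) / \<alpha> istar * exp (- (Dmin * real k / 2))
      - (real (card {1..T}) - 1) * exp (- C * real k)
      \<le> N.expectation (\<lambda>\<omega>. bayes_post T \<alpha> p istar (data s k \<omega>))"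
    unfolding post_eq using istar \<alpha>_pos \<alpha>_sum S_meas tail
    by (intro N.expectation_posterior_weight_ge) (auto simp: S_istar)
  moreover have "0 \<le> N.expectation (\<lambda>\<omega>. bayes_post T \<alpha> p istar (data s k \<omega>))"
    unfolding post_eq using \<alpha>_pos istar
    by (intro Bochner_Integration.integral_nonneg divide_nonneg_nonneg sum_nonneg mult_nonneg_nonneg)
      (auto intro: less_imp_le)
  ultimately show "pos_part (1 - eta (\<alpha> istar) T Dmin C k)
      \<le> N.expectation (\<lambda>\<omega>. bayes_post T \<alpha> p istar (data s k \<omega>))"
    by (simp add: pos_part_def eta_def)
qed

theorem theoremC14:
  fixes M :: "'w measure" and w :: "'w \<Rightarrow> real" and cg eps0 :: real
    and m k T istar :: nat and \<alpha> D \<nu> b :: "nat \<Rightarrow> real"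
    and X \<mu> :: "'x measure" and s :: "nat \<Rightarrow> 'w \<Rightarrow> 'x"
    and p :: "nat \<Rightarrow> 'x list \<Rightarrow> 'x \<Rightarrow> real" and q :: "nat \<Rightarrow> 'x list \<Rightarrow> real"
    and Ihat :: "'w \<Rightarrow> nat" and iota :: "'w \<Rightarrow> 'c" and U :: "'c \<Rightarrow> real"
    and \<beta> \<epsilon>ICL :: real
  defines "W \<equiv> {\<omega> \<in> space M. w \<omega> \<le> cg * (eps0 / 2 ^ (m - 1))}"
    and "Mc \<equiv> uniform_measure M {\<omega> \<in> space M. w \<omega> \<le> cg * (eps0 / 2 ^ (m - 1))}"
    and "G \<equiv> nat_filt M X s"
    and "Istar \<equiv> succ_set U (eps0 / 2 ^ m)"
    and "Dmin \<equiv> Min (D ` ({1..T} - {istar}))"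
    and "C \<equiv> Min ((\<lambda>j. (D j)\<^sup>2 / (8 * ((\<nu> j)\<^sup>2 + b j * D j / 2))) ` ({1..T} - {istar}))"
  assumes M: "prob_space M"
    and w_meas: "w \<in> borel_measurable M"
    and W_pos: "measure M W > 0"
    and m: "m \<ge> 1" and cg: "cg > 0" and eps0: "eps0 > 0"
    and U: "\<And>i. 0 \<le> U i \<and> U i \<le> 1"
    \<comment> \<open>prior over refinement types\<close>
    and T: "T \<ge> 1" and istar: "istar \<in> {1..T}"
    and \<alpha>_pos: "\<And>i. i \<in> {1..T} \<Longrightarrow> \<alpha> i > 0"
    and \<alpha>_sum: "(\<Sum>i\<in>{1..T}. \<alpha> i) = 1"
    \<comment> \<open>in-context examples and predictive densities (w.r.t. reference measure mu)\<close>
    and s_meas: "\<And>r. r \<in> {1..k} \<Longrightarrow> s r \<in> measurable M X"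
    and \<mu>: "sets \<mu> = sets X"
    and p_pos: "\<And>i h x. i \<in> {1..T} \<Longrightarrow> p i h x > 0"
    and p_meas: "\<And>i h. i \<in> {1..T} \<Longrightarrow> p i h \<in> borel_measurable X"
    and p_int: "\<And>i h. i \<in> {1..T} \<Longrightarrow> integrable \<mu> (p i h)"
    and p_norm: "\<And>i h. i \<in> {1..T} \<Longrightarrow> (\<integral>x. p i h x \<partial>\<mu>) = 1"
    \<comment> \<open>data generated under the true type\<close>
    and true_gen: "\<And>r A. r \<in> {1..k} \<Longrightarrow> A \<in> sets X \<Longrightarrow>
        AE \<omega> in Mc. real_cond_exp Mc (G (r - 1)) (\<lambda>\<omega>. indicator A (s r \<omega>)) \<omega>
          = (LINT x:A|\<mu>. p istar (hist s r \<omega>) x)"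
    \<comment> \<open>identifiability\<close>
    and D_pos: "\<And>j. j \<in> {1..T} - {istar} \<Longrightarrow> D j > 0"
    and b_pos: "\<And>j. j \<in> {1..T} - {istar} \<Longrightarrow> b j > 0"
    and Z_adapted: "\<And>j r. j \<in> {1..T} - {istar} \<Longrightarrow> r \<in> {1..k} \<Longrightarrow>
        llr p s istar j r \<in> borel_measurable (G r)"
    and Z_int: "\<And>j r. j \<in> {1..T} - {istar} \<Longrightarrow> r \<in> {1..k} \<Longrightarrow>
        integrable Mc (llr p s istar j r)"
    and Z_drift: "\<And>j r. j \<in> {1..T} - {istar} \<Longrightarrow> r \<in> {1..k} \<Longrightarrow>
        AE \<omega> in Mc. real_cond_exp Mc (G (r - 1)) (llr p s istar j r) \<omega> \<le> - D j"
    and Z_mgf_int: "\<And>j r l. j \<in> {1..T} - {istar} \<Longrightarrow> r \<in> {1..k} \<Longrightarrow> \<bar>l\<bar> \<le> 1 / b j \<Longrightarrow>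
        integrable Mc (\<lambda>\<omega>. exp (l * (llr p s istar j r \<omega> + D j)))"
    and Z_mgf: "\<And>j r l. j \<in> {1..T} - {istar} \<Longrightarrow> r \<in> {1..k} \<Longrightarrow> \<bar>l\<bar> \<le> 1 / b j \<Longrightarrow>
        AE \<omega> in Mc. real_cond_exp Mc (G (r - 1)) (\<lambda>\<omega>. exp (l * (llr p s istar j r \<omega> + D j))) \<omega>
          \<le> exp (l\<^sup>2 * (\<nu> j)\<^sup>2 / 2)"
    \<comment> \<open>generator: type sampler q close to the Bayes posterior in TV\<close>
    and q_nonneg: "\<And>i \<omega>. i \<in> {1..T} \<Longrightarrow> \<omega> \<in> space M \<Longrightarrow> q i (data s k \<omega>) \<ge> 0"
    and q_meas: "\<And>i. i \<in> {1..T} \<Longrightarrow> (\<lambda>\<omega>. q i (data s k \<omega>)) \<in> borel_measurable (G k)"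
    and q_sum: "\<And>\<omega>. \<omega> \<in> space M \<Longrightarrow> (\<Sum>i\<in>{1..T}. q i (data s k \<omega>)) = 1"
    and ICL: "\<And>\<omega>. \<omega> \<in> space M \<Longrightarrow>
        tv_dist T (\<lambda>i. q i (data s k \<omega>)) (\<lambda>i. bayes_post T \<alpha> p i (data s k \<omega>)) \<le> \<epsilon>ICL"
    and Ihat_meas: "Ihat \<in> measurable M (count_space UNIV)"
    and iota_meas: "{\<omega> \<in> space M. iota \<omega> \<in> Istar} \<in> sets M"
    and Ihat_law: "\<And>i. i \<in> {1..T} \<Longrightarrow>
        AE \<omega> in Mc. real_cond_exp Mc (G k) (indicator {\<omega> \<in> space M. Ihat \<omega> = i}) \<omega>
          = q i (data s k \<omega>)"
    and \<beta>: "0 \<le> \<beta>" "\<beta> < 1"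
    and proposal: "AE \<omega> in Mc.
        real_cond_exp Mc (G k) (indicator {\<omega> \<in> space M. Ihat \<omega> = istar \<and> iota \<omega> \<in> Istar}) \<omega>
          \<ge> (1 - \<beta>) * q istar (data s k \<omega>)"
  shows "cond_prob M (\<lambda>\<omega>. iota \<omega> \<in> Istar) (\<lambda>\<omega>. w \<omega> \<le> cg * (eps0 / 2 ^ (m - 1)))
           \<ge> delta_plus (1 - \<beta>) (eta (\<alpha> istar) T Dmin C k) \<epsilon>ICL"
proof -
  interpret M: prob_space M by (rule M)
  have Mc_W: "Mc = uniform_measure M W" unfolding Mc_def W_def ..
  have "W \<in> sets M" unfolding W_def using w_meas by measurable
  then interpret Mc: prob_space Mc
    unfolding Mc_W using W_pos by (intro prob_space_uniform_measure) (auto simp: M.emeasure_eq_measure)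
  have sets_Mc: "sets Mc = sets M" unfolding Mc_W by simp
  have G_sub: "sigma_finite_subalgebra Mc (G r)" if "r \<le> k" for r
    unfolding G_def using Mc.finite_measure_axioms sets_Mc s_meas that
    by (intro sigma_finite_subalgebra_nat_filt) auto
  have G_mono: "subalgebra (G r') (G r)" if "r \<le> r'" for r r'
    unfolding G_def using that by (rule subalgebra_nat_filt_mono)
  have space_Mc: "space Mc = space M" by (rule sets_eq_imp_space_eq[OF sets_Mc])
  \<comment> \<open>Of the assumptions on the data, only the conditional moment bounds enter.\<close>
  have post_int: "integrable Mc (\<lambda>\<omega>. bayes_post T \<alpha> p istar (data s k \<omega>))"
    and E_post: "pos_part (1 - eta (\<alpha> istar) T Dmin C k)
      \<le> Mc.expectation (\<lambda>\<omega>. bayes_post T \<alpha> p istar (data s k \<omega>))"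
    unfolding Dmin_def C_def
    by (rule expectation_bayes_post_ge[where F = G];
        fact Mc.prob_space_axioms G_sub G_mono istar \<alpha>_pos \<alpha>_sum p_pos D_pos b_pos Z_adapted
          Z_mgf_int Z_mgf)+
  have sampler_meas: "(\<lambda>\<omega>. q istar (data s k \<omega>)) \<in> borel_measurable Mc"
    by (rule measurable_from_subalg[OF sigma_finite_subalgebra.subalg[OF G_sub] q_meas[OF istar]]) simp
  have post_sum: "(\<Sum>i\<in>{1..T}. bayes_post T \<alpha> p i (data s k \<omega>)) = 1" for \<omega>
    using T \<alpha>_pos p_pos by (rule sum_bayes_post)
  note tv = Mc.expectation_ge_if_tv_dist_le[OF istar, where q = "\<lambda>i \<omega>. q i (data s k \<omega>)"
      and \<pi> = "\<lambda>i \<omega>. bayes_post T \<alpha> p i (data s k \<omega>)", unfolded space_Mc,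
      OF q_sum q_nonneg sampler_meas post_sum post_int ICL]
  have E_sampler: "pos_part (1 - eta (\<alpha> istar) T Dmin C k) - \<epsilon>ICL
      \<le> Mc.expectation (\<lambda>\<omega>. q istar (data s k \<omega>))"
    using tv(2) E_post by linarith
  have "delta_plus (1 - \<beta>) (eta (\<alpha> istar) T Dmin C k) \<epsilon>ICL
      \<le> Mc.expectation (\<lambda>\<omega>. (1 - \<beta>) * q istar (data s k \<omega>))"
    using mult_left_mono[OF E_sampler, of "1 - \<beta>"] \<beta> by (simp add: delta_plus_def right_diff_distrib)
  also have "\<dots> \<le> Mc.prob {\<omega> \<in> space M. Ihat \<omega> = istar \<and> iota \<omega> \<in> Istar}"
  proof (rule sigma_finite_subalgebra.integral_le_measure_if_le_cond_exp_indicator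
      [OF G_sub[OF order_refl] Mc.finite_measure_axioms _ _ proposal])
    have "{\<omega> \<in> space M. Ihat \<omega> = istar \<and> iota \<omega> \<in> Istar}
        = (Ihat -` {istar} \<inter> space M) \<inter> {\<omega> \<in> space M. iota \<omega> \<in> Istar}" by auto
    then show "{\<omega> \<in> space M. Ihat \<omega> = istar \<and> iota \<omega> \<in> Istar} \<in> sets Mc"
      using measurable_sets[OF Ihat_meas, of "{istar}"] iota_meas sets_Mc by auto
  qed (use tv(1) in simp)
  also have "\<dots> \<le> Mc.prob {\<omega> \<in> space M. iota \<omega> \<in> Istar}"
    using iota_meas sets_Mc by (intro Mc.finite_measure_mono) auto
  also have "\<dots> = cond_prob M (\<lambda>\<omega>. iota \<omega> \<in> Istar) (\<lambda>\<omega>. w \<omega> \<le> cg * (eps0 / 2 ^ (m - 1)))"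
  proof -
    have "Measurable.pred M (\<lambda>\<omega>. w \<omega> \<le> cg * (eps0 / 2 ^ (m - 1)))" using w_meas by measurable
    moreover have "Measurable.pred M (\<lambda>\<omega>. iota \<omega> \<in> Istar)" using iota_meas by (simp add: pred_def)
    ultimately show ?thesis using M.measure_uniform_measure_eq_cond_prob unfolding Mc_def by simp
  qed
  finally show ?thesis .
qed

end
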